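(* Let $A$ be a topological ring. If the completion of $A$ is a field, then $A$ is topologically simple. If $A$ is a Huber ring whose topology is defined by an absolute value, then conversely $A$ topologically simple implies that its completion is a field.
   Context: A topological ring is topologically simple if the closure of the zero ideal is its only closed ideal (equivalently, every nonzero element of $A/\overline{(0)}$ is a topological unit, i.e. generates a dense ideal). *)

theory Defs
  imports "HOL-Analysis.Analysis"
begin

definition topological_ring :: "'a::{comm_ring_1,topological_space} itself \<Rightarrow> bool" where
  "topological_ring _ \<longleftrightarrow>
     continuous_on UNIV (\<lambda>p::'a \<times> 'a. fst p + snd p) \<and>
     continuous_on UNIV (\<lambda>x::'a. - x) \<and>
     continuous_on UNIV (\<lambda>p::'a \<times> 'a. fst p * snd p)"

definition ring_ideal :: "'a::comm_ring_1 set \<Rightarrow> bool" where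
  "ring_ideal J \<longleftrightarrow> 0 \<in> J \<and> (\<forall>x\<in>J. \<forall>y\<in>J. x + y \<in> J) \<and> (\<forall>x\<in>J. - x \<in> J)
     \<and> (\<forall>a. \<forall>x\<in>J. a * x \<in> J)"

definition topologically_simple :: "'a::{comm_ring_1,topological_space} itself \<Rightarrow> bool" where
  "topologically_simple _ \<longleftrightarrow>
     (\<forall>J::'a set. ring_ideal J \<and> closed J \<longrightarrow> J = closure {0} \<or> J = UNIV)"

definition add_cauchy :: "'a::{ab_group_add,topological_space} filter \<Rightarrow> bool" where
  "add_cauchy F \<longleftrightarrow> (\<forall>U. open U \<and> 0 \<in> U \<longrightarrow>
      (\<exists>S. eventually (\<lambda>x. x \<in> S) F \<and> (\<forall>x\<in>S. \<forall>y\<in>S. x - y \<in> U)))"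

definition add_complete :: "'a::{ab_group_add,topological_space} itself \<Rightarrow> bool" where
  "add_complete _ \<longleftrightarrow> (\<forall>F::'a filter. F \<noteq> bot \<and> add_cauchy F \<longrightarrow> (\<exists>l. F \<le> nhds l))"

definition ring_hom_fun :: "('a::comm_ring_1 \<Rightarrow> 'b::comm_ring_1) \<Rightarrow> bool" where
  "ring_hom_fun i \<longleftrightarrow> i 1 = 1 \<and> (\<forall>x y. i (x + y) = i x + i y) \<and> (\<forall>x y. i (x * y) = i x * i y)"

definition is_completion ::
  "('a::{comm_ring_1,topological_space} \<Rightarrow> 'b::{comm_ring_1,t2_space}) \<Rightarrow> bool" where
  "is_completion i \<longleftrightarrow> topological_ring TYPE('b) \<and> add_complete TYPE('b) \<and>
     ring_hom_fun i \<and> closure (range i) = UNIV \<and>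
     (\<forall>S::'a set. open S \<longleftrightarrow> (\<exists>U. open U \<and> S = i -` U))"

definition is_field_ring :: "'b::comm_ring_1 itself \<Rightarrow> bool" where
  "is_field_ring _ \<longleftrightarrow> (0::'b) \<noteq> 1 \<and> (\<forall>x::'b. x \<noteq> 0 \<longrightarrow> (\<exists>y. x * y = 1))"

text \<open>Huber rings.  For a subring A0 and a finite set T, the ideal I of A0 generated by T
 has n-th power I^n = the A0-ideal generated by the monomials of degree n in T.\<close>
inductive_set sub_span :: "'a::comm_ring_1 set \<Rightarrow> 'a set \<Rightarrow> 'a set" for A0 S where
  zero: "0 \<in> sub_span A0 S"
| gen: "a \<in> A0 \<Longrightarrow> s \<in> S \<Longrightarrow> a * s \<in> sub_span A0 S"
| add: "x \<in> sub_span A0 S \<Longrightarrow> y \<in> sub_span A0 S \<Longrightarrow> x + y \<in> sub_span A0 S"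

definition ideal_pow :: "'a::comm_ring_1 set \<Rightarrow> 'a set \<Rightarrow> nat \<Rightarrow> 'a set" where
  "ideal_pow A0 T n = sub_span A0 {prod_list xs | xs. set xs \<subseteq> T \<and> length xs = n}"

definition subring :: "'a::comm_ring_1 set \<Rightarrow> bool" where
  "subring A0 \<longleftrightarrow> 1 \<in> A0 \<and> (\<forall>x\<in>A0. \<forall>y\<in>A0. x + y \<in> A0 \<and> x * y \<in> A0) \<and> (\<forall>x\<in>A0. - x \<in> A0)"

definition huber_ring :: "'a::{comm_ring_1,topological_space} itself \<Rightarrow> bool" where
  "huber_ring _ \<longleftrightarrow> topological_ring TYPE('a) \<and>
     (\<exists>(A0::'a set) T. subring A0 \<and> open A0 \<and> finite T \<and> T \<subseteq> A0 \<and>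
        (\<forall>n. \<exists>U. open U \<and> 0 \<in> U \<and> U \<subseteq> ideal_pow A0 T n) \<and>
        (\<forall>U. open U \<and> 0 \<in> U \<longrightarrow> (\<exists>n. ideal_pow A0 T n \<subseteq> U)))"

definition absolute_value :: "('a::comm_ring_1 \<Rightarrow> real) \<Rightarrow> bool" where
  "absolute_value f \<longleftrightarrow> (\<forall>x. f x \<ge> 0) \<and> (\<forall>x. f x = 0 \<longleftrightarrow> x = 0) \<and> f 1 = 1 \<and>
     (\<forall>x y. f (x * y) = f x * f y) \<and> (\<forall>x y. f (x + y) \<le> f x + f y)"

definition topology_defined_by_abs :: "('a::{comm_ring_1,topological_space} \<Rightarrow> real) \<Rightarrow> bool" where
  "topology_defined_by_abs f \<longleftrightarrow> absolute_value f \<and>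
     (\<forall>S::'a set. open S \<longleftrightarrow> (\<forall>x\<in>S. \<exists>e>0. \<forall>y. f (y - x) < e \<longrightarrow> y \<in> S))"

end

theory Submission
  imports Defs
begin

text \<open>A ring is topologically simple exactly when every element outside the closure of zero is a
  topological unit, i.e. generates a dense ideal.  If the completion is a field, an element x with
  nonzero image has an inverse y in the completion; density of the image gives elements a with
  x a arbitrarily close to 1.  Conversely, for a topology given by an absolute value, topological
  simplicity provides, for every nonzero a, elements y with a y arbitrarily close to 1.  Given a
  nonzero b in the completion, take pairs (a, y) with a close to b and a y close to 1; since a stays
  bounded away from 0, the elements y form a Cauchy filter, whose limit c satisfies b c = 1.\<close>

lemma absolute_valueD:
  assumes "absolute_value f"
  shows "f x \<ge> 0" "f x = 0 \<longleftrightarrow> x = 0" "f 1 = 1"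
    "f (x * y) = f x * f y" "f (x + y) \<le> f x + f y"
  using assms unfolding absolute_value_def by auto

lemma absolute_value_minus:
  assumes "absolute_value f"
  shows "f (- x) = f x"
proof -
  note av = absolute_valueD[OF assms]
  have "f (-1) * f (-1) = 1" using av(3) av(4)[of "-1" "-1"] by simp
  hence "(f (-1) - 1) * (f (-1) + 1) = 0" by (simp add: algebra_simps)
  moreover have "f (-1) + 1 > 0" using av(1)[of "-1"] by simp
  ultimately have "f (-1) = 1" by simp
  thus ?thesis using av(4)[of "-1" x] by simp
qed

lemma absolute_value_diff_commute:
  assumes "absolute_value f"
  shows "f (x - y) = f (y - x)"
  using absolute_value_minus[OF assms, of "y - x"] by simp

lemma absolute_value_triangle_diff:
  assumes "absolute_value f"
  shows "f (x - z) \<le> f (x - y) + f (y - z)"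
  using absolute_valueD(5)[OF assms, of "x - y" "y - z"] by simp

lemma absolute_value_approx_inverses_close:
  fixes f :: "'a::comm_ring_1 \<Rightarrow> real"
  assumes av: "absolute_value f" and "\<delta> > 0" and "\<delta> \<le> f a" and "\<delta> \<le> f a'" and "\<epsilon> \<le> 1"
    and y: "f (a * y - 1) < \<epsilon>" and y': "f (a' * y' - 1) < \<epsilon>"
  shows "f (y - y') < (2 * \<epsilon> + 2 * f (a - a') / \<delta>) / \<delta>"
proof -
  note av' = absolute_valueD[OF av]
  have "f (a' * y') \<le> f (a' * y' - 1) + f 1"
    using av'(5)[of "a' * y' - 1" 1] by simp
  hence "f a' * f y' \<le> 2" using y' \<open>\<epsilon> \<le> 1\<close> av'(3,4) by simp
  moreover have "\<delta> * f y' \<le> f a' * f y'"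
    using \<open>\<delta> \<le> f a'\<close> av'(1) by (simp add: mult_right_mono)
  ultimately have bound_y': "f y' \<le> 2 / \<delta>"
    using \<open>\<delta> > 0\<close> by (simp add: field_simps)
  have "a * (y - y') = (a * y - 1) - (a' * y' - 1) + (a' - a) * y'"
    by (simp add: algebra_simps)
  hence "f a * f (y - y') \<le> f ((a * y - 1) - (a' * y' - 1)) + f (a' - a) * f y'"
    using av'(4,5) by metis
  also have "\<dots> \<le> f (a * y - 1) + f (a' * y' - 1) + f (a - a') * f y'"
    using av'(5)[of "a * y - 1" "- (a' * y' - 1)"] absolute_value_minus[OF av, of "a' * y' - 1"]
      absolute_value_diff_commute[OF av, of a' a]
    by simp
  also have "\<dots> < 2 * \<epsilon> + f (a - a') * (2 / \<delta>)"
    using y y' bound_y' av'(1)[of "a - a'"] by (smt (verit) mult_left_mono)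
  finally have "\<delta> * f (y - y') < 2 * \<epsilon> + 2 * f (a - a') / \<delta>"
    using \<open>\<delta> \<le> f a\<close> av'(1)[of "y - y'"] mult_right_mono[of \<delta> "f a" "f (y - y')"]
    by (simp add: mult.commute)
  thus ?thesis using \<open>\<delta> > 0\<close> by (simp add: field_simps)
qed

lemma open_abs_ball:
  assumes "topology_defined_by_abs f"
  shows "open {y. f (y - x) < e}"
proof -
  have av: "absolute_value f" using assms by (simp add: topology_defined_by_abs_def)
  have "\<exists>d>0. \<forall>y. f (y - w) < d \<longrightarrow> f (y - x) < e" if "f (w - x) < e" for w
    using that absolute_value_triangle_diff[OF av, of _ x w]
    by (intro exI[of _ "e - f (w - x)"]) (smt (verit))
  thus ?thesis using assms by (simp add: topology_defined_by_abs_def)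
qed

lemma mem_closure_abs_iff:
  assumes "topology_defined_by_abs f"
  shows "z \<in> closure S \<longleftrightarrow> (\<forall>e>0. \<exists>s\<in>S. f (s - z) < e)"
proof
  have av: "absolute_value f" using assms by (simp add: topology_defined_by_abs_def)
  assume "z \<in> closure S"
  moreover have "z \<in> {y. f (y - z) < e}" if "e > 0" for e
    using that absolute_valueD(2)[OF av, of 0] by simp
  ultimately show "\<forall>e>0. \<exists>s\<in>S. f (s - z) < e"
    using open_abs_ball[OF assms] open_Int_closure_eq_empty by blast
next
  assume near: "\<forall>e>0. \<exists>s\<in>S. f (s - z) < e"
  show "z \<in> closure S"
  proof (rule ccontr)
    assume "z \<notin> closure S"
    then obtain e where "e > 0" and "\<forall>y. f (y - z) < e \<longrightarrow> y \<notin> closure S"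
      using assms unfolding topology_defined_by_abs_def
      by (metis ComplD ComplI open_Compl closed_closure)
    thus False using near closure_subset by blast
  qed
qed

lemma closure_zero_abs:
  fixes f :: "'a::{comm_ring_1,topological_space} \<Rightarrow> real"
  assumes "topology_defined_by_abs f"
  shows "closure {0::'a} = {0}"
proof -
  have av: "absolute_value f" using assms by (simp add: topology_defined_by_abs_def)
  have "x = 0" if "x \<in> closure {0}" for x :: 'a
  proof (rule ccontr)
    assume "x \<noteq> 0"
    hence "f x > 0" using absolute_valueD(1,2)[OF av, of x] by simp
    moreover have "\<not> f (0 - x) < f x" using absolute_value_minus[OF av, of x] by simp
    ultimately show False using that unfolding mem_closure_abs_iff[OF assms] by blast
  qed
  thus ?thesis using closure_subset by blast
qed

lemma topological_ring_continuous_mult_left: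
  fixes a :: "'a::{comm_ring_1,topological_space}"
  assumes "topological_ring TYPE('a)"
  shows "continuous_on UNIV (\<lambda>x. a * x)"
proof -
  have "continuous_on UNIV (\<lambda>p::'a \<times> 'a. fst p * snd p)"
    using assms by (simp add: topological_ring_def)
  from continuous_on_compose2[OF this continuous_on_Pair[OF continuous_on_const continuous_on_id]]
  show ?thesis by simp
qed

lemma topological_ring_continuous_diff:
  assumes "topological_ring TYPE('a::{comm_ring_1,topological_space})"
  shows "continuous_on UNIV (\<lambda>p::'a \<times> 'a. fst p - snd p)"
proof -
  have add: "continuous_on UNIV (\<lambda>p::'a \<times> 'a. fst p + snd p)"
    and minus: "continuous_on UNIV (\<lambda>x::'a. - x)"
    using assms by (auto simp: topological_ring_def)
  have "continuous_on UNIV (\<lambda>p::'a \<times> 'a. (fst p, - snd p))"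
    by (intro continuous_on_Pair continuous_on_fst continuous_on_id
        continuous_on_compose2[OF minus continuous_on_snd[OF continuous_on_id]]) auto
  from continuous_on_compose2[OF add this] show ?thesis by simp
qed

lemma ring_ideal_principal: "ring_ideal (range (\<lambda>y. x * y))"
  unfolding ring_ideal_def
  by (metis (no_types, lifting) mult_zero_right distrib_left minus_mult_right
      mult.left_commute rangeE rangeI)

lemma ring_ideal_closure:
  fixes J :: "'a::{comm_ring_1,topological_space} set"
  assumes ring: "topological_ring TYPE('a)" and J: "ring_ideal J"
  shows "ring_ideal (closure J)"
proof -
  have closed_under: "g ` closure S \<subseteq> closure J"
    if "continuous_on UNIV g" "g ` S \<subseteq> J" for g :: "'c::topological_space \<Rightarrow> 'a" and S
    using continuous_image_closure_subset[OF that(1)] closure_mono[OF that(2)] by blast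
  have add: "continuous_on UNIV (\<lambda>p::'a \<times> 'a. fst p + snd p)"
    and minus: "continuous_on UNIV (\<lambda>x::'a. - x)"
    using ring by (auto simp: topological_ring_def)
  have "(\<lambda>p. fst p + snd p) ` (J \<times> J) \<subseteq> J"
    using J by (auto simp: ring_ideal_def)
  from closed_under[OF add this] have "x + y \<in> closure J"
    if "x \<in> closure J" "y \<in> closure J" for x y
    using that by (force simp: closure_Times)
  moreover have "uminus ` J \<subseteq> J" "(\<lambda>x. a * x) ` J \<subseteq> J" for a
    using J by (auto simp: ring_ideal_def)
  ultimately show ?thesis
    using closed_under[OF minus] closed_under[OF topological_ring_continuous_mult_left[OF ring]]
      J closure_subset
    unfolding ring_ideal_def by (meson image_subset_iff subsetD)
qed

definition topological_unit :: "'a::{comm_ring_1,topological_space} \<Rightarrow> bool" where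
  "topological_unit x \<longleftrightarrow> 1 \<in> closure (range (\<lambda>y. x * y))"

lemma topologically_simpleI:
  assumes "\<And>x::'a::{comm_ring_1,topological_space}. x \<notin> closure {0} \<Longrightarrow> topological_unit x"
  shows "topologically_simple TYPE('a)"
  unfolding topologically_simple_def
proof (intro allI impI)
  fix J :: "'a set" assume "ring_ideal J \<and> closed J"
  hence J: "ring_ideal J" "closed J" by auto
  have "closure {0} \<subseteq> J"
    using J by (simp add: closure_minimal ring_ideal_def)
  moreover have "J = UNIV" if "x \<in> J" "x \<notin> closure {0}" for x
  proof -
    have "range (\<lambda>y. x * y) \<subseteq> J" using J(1) that(1) by (auto simp: ring_ideal_def mult.commute)
    hence "1 \<in> J" using assms[OF that(2)] J(2) closure_minimal
      unfolding topological_unit_def by blast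
    thus ?thesis using J(1) unfolding ring_ideal_def by (metis UNIV_eq_I mult.right_neutral)
  qed
  ultimately show "J = closure {0} \<or> J = UNIV" by blast
qed

lemma topologically_simpleD:
  fixes x :: "'a::{comm_ring_1,topological_space}"
  assumes "topological_ring TYPE('a)" and "topologically_simple TYPE('a)" and "x \<notin> closure {0}"
  shows "topological_unit x"
proof -
  let ?J = "closure (range (\<lambda>y. x * y))"
  have "ring_ideal ?J" by (rule ring_ideal_closure[OF assms(1) ring_ideal_principal])
  moreover have "x \<in> ?J" by (metis closure_subset mult.right_neutral rangeI subsetD)
  ultimately have "?J = UNIV"
    using assms(2,3) unfolding topologically_simple_def by (metis closed_closure)
  thus ?thesis unfolding topological_unit_def by simp
qed

lemma ring_hom_fun_zero: "ring_hom_fun i \<Longrightarrow> i 0 = 0"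
  unfolding ring_hom_fun_def by (metis add_cancel_right_right add_0)

lemma ring_hom_fun_diff: "ring_hom_fun i \<Longrightarrow> i (x - y) = i x - i y"
  unfolding ring_hom_fun_def by (metis add_diff_cancel diff_add_cancel)

lemma completion_open_iff: "is_completion i \<Longrightarrow> open S \<longleftrightarrow> (\<exists>U. open U \<and> S = i -` U)"
  by (simp add: is_completion_def)

lemma closure_zero_completion:
  fixes i :: "'a::{comm_ring_1,topological_space} \<Rightarrow> 'b::{comm_ring_1,t2_space}"
  assumes comp: "is_completion i"
  shows "closure {0} = i -` {0}"
proof
  have hom: "ring_hom_fun i" using comp by (simp add: is_completion_def)
  have "open (i -` (- {0}))"
    using completion_open_iff[OF comp, of "i -` (- {0})"] by blast
  hence "closed (i -` {0})" by (simp add: closed_def vimage_Compl)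
  thus "closure {0} \<subseteq> i -` {0}"
    using ring_hom_fun_zero[OF hom] by (simp add: closure_minimal)
  show "i -` {0} \<subseteq> closure {0}"
  proof
    fix x assume "x \<in> i -` {0}"
    have "0 \<in> S" if "open S" "x \<in> S" for S
    proof -
      obtain U where "S = i -` U" using completion_open_iff[OF comp, of S] \<open>open S\<close> by blast
      thus ?thesis using \<open>x \<in> i -` {0}\<close> \<open>x \<in> S\<close> ring_hom_fun_zero[OF hom] by simp
    qed
    thus "x \<in> closure {0}" unfolding closure_iff_nhds_not_empty by blast
  qed
qed

lemma completion_field_imp_topological_unit:
  fixes i :: "'a::{comm_ring_1,topological_space} \<Rightarrow> 'b::{comm_ring_1,t2_space}"
  assumes comp: "is_completion i" and field: "is_field_ring TYPE('b)" and "i x \<noteq> 0"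
  shows "topological_unit x"
  unfolding topological_unit_def closure_iff_nhds_not_empty
proof (intro allI impI)
  fix A S assume "S \<subseteq> A" "open S" "(1::'a) \<in> S"
  from comp have hom: "ring_hom_fun i" and dense: "closure (range i) = UNIV"
    and ring: "topological_ring TYPE('b)"
    by (auto simp: is_completion_def)
  obtain U where U: "open U" "S = i -` U" using completion_open_iff[OF comp, of S] \<open>open S\<close> by blast
  obtain y where y: "i x * y = 1" using field \<open>i x \<noteq> 0\<close> by (auto simp: is_field_ring_def)
  let ?V = "(\<lambda>z. i x * z) -` U"
  have "open ?V" by (rule open_vimage[OF U(1) topological_ring_continuous_mult_left[OF ring]])
  moreover have "y \<in> ?V" using y U \<open>1 \<in> S\<close> hom by (auto simp: ring_hom_fun_def)
  ultimately obtain a where "i a \<in> ?V"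
    using dense open_Int_closure_eq_empty[of ?V "range i"] by auto
  hence "x * a \<in> S" using U(2) hom by (simp add: ring_hom_fun_def)
  thus "range (\<lambda>y. x * y) \<inter> A \<noteq> {}" using \<open>S \<subseteq> A\<close> by blast
qed

lemma topologically_simple_if_completion_field:
  fixes i :: "'a::{comm_ring_1,topological_space} \<Rightarrow> 'b::{comm_ring_1,t2_space}"
  assumes "is_completion i" and "is_field_ring TYPE('b)"
  shows "topologically_simple TYPE('a)"
  using completion_field_imp_topological_unit[OF assms] closure_zero_completion[OF assms(1)]
  by (intro topologically_simpleI) blast

context
  fixes i :: "'a::{comm_ring_1,topological_space} \<Rightarrow> 'b::{comm_ring_1,t2_space}"
    and f :: "'a \<Rightarrow> real"
  assumes completion: "is_completion i" and abs_topology: "topology_defined_by_abs f"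
begin

lemma completion_abs_nhds:
  assumes "open U" and "i x \<in> U"
  shows "\<exists>e>0. \<forall>y. f (y - x) < e \<longrightarrow> i y \<in> U"
proof -
  have "open (i -` U)" using completion_open_iff[OF completion, of "i -` U"] assms(1) by blast
  moreover have "x \<in> i -` U" using assms(2) by simp
  ultimately show ?thesis
    using abs_topology unfolding topology_defined_by_abs_def by auto
qed

lemma completion_abs_ball_vimage: "\<exists>U. open U \<and> {y. f y < e} = i -` U"
  using open_abs_ball[OF abs_topology, of 0 e] completion_open_iff[OF completion, of "{y. f y < e}"]
  by simp

lemma completion_zero_neq_one: "(0::'b) \<noteq> 1"
proof
  assume "(0::'b) = 1"
  obtain U where U: "{y. f y < 1/2} = i -` U" using completion_abs_ball_vimage by blast
  have av: "absolute_value f" using abs_topology by (simp add: topology_defined_by_abs_def)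
  have hom: "ring_hom_fun i" using completion by (simp add: is_completion_def)
  have "i 1 = i 0" using \<open>0 = 1\<close> ring_hom_fun_zero[OF hom] hom by (simp add: ring_hom_fun_def)
  hence "f 1 < 1/2 \<longleftrightarrow> f 0 < 1/2" using U by (metis mem_Collect_eq vimage_eq)
  thus False using absolute_valueD(2)[OF av, of 0] absolute_valueD(3)[OF av] by simp
qed

lemma completion_abs_bounded_below:
  assumes "b \<noteq> 0"
  obtains P \<delta> where "open P" "b \<in> P" "\<delta> > 0" "\<And>a. i a \<in> P \<Longrightarrow> \<delta> \<le> f a"
proof -
  obtain P Q where PQ: "open P" "open Q" "b \<in> P" "0 \<in> Q" "P \<inter> Q = {}"
    using hausdorff[OF assms] by blast
  have "i 0 \<in> Q" using PQ(4) completion by (simp add: is_completion_def ring_hom_fun_zero)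
  from completion_abs_nhds[OF PQ(2) this]
  obtain \<delta> where "\<delta> > 0" and \<delta>: "\<forall>y. f (y - 0) < \<delta> \<longrightarrow> i y \<in> Q" by blast
  have "\<delta> \<le> f a" if "i a \<in> P" for a
  proof (rule ccontr)
    assume "\<not> \<delta> \<le> f a"
    hence "i a \<in> Q" using \<delta> by simp
    thus False using that PQ(5) by blast
  qed
  thus ?thesis using that PQ(1,3) \<open>\<delta> > 0\<close> by blast
qed

lemma completion_abs_small_nhds:
  assumes "\<eta> > 0"
  obtains W where "open W" "b \<in> W" "\<And>a a'. i a \<in> W \<Longrightarrow> i a' \<in> W \<Longrightarrow> f (a - a') < \<eta>"
proof -
  obtain U where U: "open U" "{y. f y < \<eta>} = i -` U" using completion_abs_ball_vimage by blast
  have av: "absolute_value f" using abs_topology by (simp add: topology_defined_by_abs_def)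
  have hom: "ring_hom_fun i" using completion by (simp add: is_completion_def)
  have "0 \<in> {y. f y < \<eta>}" using assms absolute_valueD(2)[OF av, of 0] by simp
  hence "0 \<in> U" using U(2) ring_hom_fun_zero[OF hom] by (metis vimageD)
  have "open ((\<lambda>p::'b \<times> 'b. fst p - snd p) -` U)"
    using completion U(1) by (intro open_vimage topological_ring_continuous_diff)
      (simp_all add: is_completion_def)
  moreover have "(b, b) \<in> (\<lambda>p. fst p - snd p) -` U" using \<open>0 \<in> U\<close> by simp
  ultimately obtain W1 W2 where W: "open W1" "open W2" "(b, b) \<in> W1 \<times> W2"
    "W1 \<times> W2 \<subseteq> (\<lambda>p. fst p - snd p) -` U"
    by (rule open_prod_elim)
  have "f (a - a') < \<eta>" if "i a \<in> W1 \<inter> W2" "i a' \<in> W1 \<inter> W2" for a a'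
  proof -
    have "i (a - a') \<in> U" using that W(4) ring_hom_fun_diff[OF hom, of a a'] by auto
    thus ?thesis using U(2) by blast
  qed
  moreover have "open (W1 \<inter> W2)" "b \<in> W1 \<inter> W2" using W by auto
  ultimately show ?thesis using that by blast
qed

definition approx_inverse_filter :: "'b \<Rightarrow> ('a \<times> 'a) filter" where
  "approx_inverse_filter b = filtercomap (\<lambda>(a, y). (i a, f (a * y - 1))) (nhds b \<times>\<^sub>F nhds 0)"

lemma eventually_approx_inverse_filter:
  assumes "open W" "b \<in> W" "e > 0"
  shows "eventually (\<lambda>(a, y). i a \<in> W \<and> f (a * y - 1) < e) (approx_inverse_filter b)"
proof -
  have "eventually (\<lambda>r::real. r < e) (nhds 0)"
    using assms(3) by (intro eventually_nhds_in_open[of "{..<e}", simplified]) auto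
  from eventually_prodI[OF eventually_nhds_in_open[OF assms(1,2)] this]
  have "eventually (\<lambda>(u, r). u \<in> W \<and> r < e) (nhds b \<times>\<^sub>F nhds 0)"
    by (simp add: case_prod_unfold)
  thus ?thesis unfolding approx_inverse_filter_def eventually_filtercomap
    by (intro exI[of _ "\<lambda>(u, r). u \<in> W \<and> r < e"]) auto
qed

lemma approx_inverse_filter_ne_bot:
  assumes "b \<noteq> 0" and approx: "\<And>x e. x \<noteq> 0 \<Longrightarrow> e > 0 \<Longrightarrow> \<exists>y. f (x * y - 1) < e"
  shows "approx_inverse_filter b \<noteq> bot"
  unfolding approx_inverse_filter_def
proof (rule filtercomap_neq_bot)
  fix R :: "'b \<times> real \<Rightarrow> bool" assume "eventually R (nhds b \<times>\<^sub>F nhds 0)"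
  then obtain Pb Pr where Pb: "eventually Pb (nhds b)" and Pr: "eventually Pr (nhds (0::real))"
    and R: "\<And>u r. Pb u \<Longrightarrow> Pr r \<Longrightarrow> R (u, r)"
    unfolding eventually_prod_filter by blast
  obtain S where S: "open S" "b \<in> S" "\<forall>u\<in>S. Pb u" using Pb unfolding eventually_nhds by blast
  obtain d where d: "d > 0" "\<forall>r. dist r 0 < d \<longrightarrow> Pr r"
    using Pr unfolding eventually_nhds_metric by blast
  have "open (S - {0})" "b \<in> S - {0}" using S assms(1) by auto
  then obtain a where "i a \<in> S - {0}"
    using completion open_Int_closure_eq_empty[of "S - {0}" "range i"]
    by (auto simp: is_completion_def)
  moreover from this have "a \<noteq> 0"
    using completion by (auto simp: is_completion_def ring_hom_fun_zero)
  then obtain y where "f (a * y - 1) < d" using approx d(1) by blast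
  moreover have "f (a * y - 1) \<ge> 0"
    using abs_topology absolute_valueD(1) by (auto simp: topology_defined_by_abs_def)
  ultimately have "R (i a, f (a * y - 1))" using R S(3) d(2) by (simp add: dist_real_def)
  thus "\<exists>p. R ((\<lambda>(a, y). (i a, f (a * y - 1))) p)" by auto
qed

lemma tendsto_approx_inverse_filter_fst: "((\<lambda>(a, y). i a) \<longlongrightarrow> b) (approx_inverse_filter b)"
proof (rule topological_tendstoI)
  fix S assume "open S" "b \<in> S"
  from eventually_approx_inverse_filter[OF this zero_less_one]
  show "eventually (\<lambda>p. (case p of (a, y) \<Rightarrow> i a) \<in> S) (approx_inverse_filter b)"
    by (rule eventually_mono) auto
qed

lemma tendsto_approx_inverse_filter_mult:
  "((\<lambda>(a, y). i (a * y)) \<longlongrightarrow> 1) (approx_inverse_filter b)"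
proof (rule topological_tendstoI)
  fix S :: "'b set" assume "open S" "1 \<in> S"
  moreover have "i 1 = 1" using completion by (simp add: is_completion_def ring_hom_fun_def)
  ultimately obtain e where "e > 0" and e: "\<forall>y. f (y - 1) < e \<longrightarrow> i y \<in> S"
    using completion_abs_nhds[of S 1] by auto
  from eventually_approx_inverse_filter[OF open_UNIV UNIV_I \<open>e > 0\<close>]
  show "eventually (\<lambda>p. (case p of (a, y) \<Rightarrow> i (a * y)) \<in> S) (approx_inverse_filter b)"
    by (rule eventually_mono) (use e in auto)
qed

lemma completion_approx_inverses_close:
  assumes "b \<noteq> 0" and "\<eta> > 0"
  obtains W \<epsilon> where "open W" "b \<in> W" "\<epsilon> > 0"
    "\<And>a y a' y'. i a \<in> W \<Longrightarrow> i a' \<in> W \<Longrightarrow> f (a * y - 1) < \<epsilon> \<Longrightarrow> f (a' * y' - 1) < \<epsilon>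
       \<Longrightarrow> f (y - y') < \<eta>"
proof -
  obtain P \<delta> where P: "open P" "b \<in> P" and "\<delta> > 0" and low: "\<And>a. i a \<in> P \<Longrightarrow> \<delta> \<le> f a"
    by (rule completion_abs_bounded_below[OF assms(1)]) blast
  have "\<eta> * \<delta> * \<delta> / 4 > 0" using \<open>\<eta> > 0\<close> \<open>\<delta> > 0\<close> by simp
  then obtain W where W: "open W" "b \<in> W"
    and close: "\<And>a a'. i a \<in> W \<Longrightarrow> i a' \<in> W \<Longrightarrow> f (a - a') < \<eta> * \<delta> * \<delta> / 4"
    by (rule completion_abs_small_nhds[where b = b]) blast
  define \<epsilon> where "\<epsilon> = min 1 (\<eta> * \<delta> / 4)"
  have "f (y - y') < \<eta>"
    if a: "i a \<in> W \<inter> P" "f (a * y - 1) < \<epsilon>" and a': "i a' \<in> W \<inter> P" "f (a' * y' - 1) < \<epsilon>"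
    for a y a' y'
  proof -
    have av: "absolute_value f" using abs_topology by (simp add: topology_defined_by_abs_def)
    have "f (y - y') < (2 * \<epsilon> + 2 * f (a - a') / \<delta>) / \<delta>"
      using absolute_value_approx_inverses_close[OF av \<open>\<delta> > 0\<close> low low _ a(2) a'(2)] a(1) a'(1)
      by (simp add: \<epsilon>_def)
    also have "\<dots> \<le> (\<eta> * \<delta> / 2 + \<eta> * \<delta> / 2) / \<delta>"
    proof -
      have "f (a - a') < \<eta> * \<delta> * \<delta> / 4" using close a(1) a'(1) by blast
      hence "2 * f (a - a') / \<delta> \<le> \<eta> * \<delta> / 2"
        using \<open>\<delta> > 0\<close> by (simp add: field_simps)
      moreover have "2 * \<epsilon> \<le> \<eta> * \<delta> / 2" by (simp add: \<epsilon>_def)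
      ultimately show ?thesis using \<open>\<delta> > 0\<close> by (meson add_mono divide_right_mono less_imp_le)
    qed
    also have "\<dots> = \<eta>" using \<open>\<delta> > 0\<close> by simp
    finally show ?thesis .
  qed
  moreover have "open (W \<inter> P)" "b \<in> W \<inter> P" "\<epsilon> > 0"
    using W P \<open>\<eta> > 0\<close> \<open>\<delta> > 0\<close> by (auto simp: \<epsilon>_def)
  ultimately show ?thesis using that by blast
qed

lemma add_cauchy_approx_inverse_filter:
  assumes "b \<noteq> 0"
  shows "add_cauchy (filtermap (\<lambda>(a, y). i y) (approx_inverse_filter b))"
  unfolding add_cauchy_def
proof (intro allI impI)
  fix U :: "'b set" assume U: "open U \<and> 0 \<in> U"
  have hom: "ring_hom_fun i" using completion by (simp add: is_completion_def)
  hence "i 0 \<in> U" using U by (simp add: ring_hom_fun_zero)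
  from completion_abs_nhds[OF conjunct1[OF U] this]
  obtain \<eta> where "\<eta> > 0" and \<eta>: "\<forall>y. f (y - 0) < \<eta> \<longrightarrow> i y \<in> U" by blast
  obtain W \<epsilon> where W: "open W" "b \<in> W" "\<epsilon> > 0" and close:
    "\<And>a y a' y'. i a \<in> W \<Longrightarrow> i a' \<in> W \<Longrightarrow> f (a * y - 1) < \<epsilon> \<Longrightarrow> f (a' * y' - 1) < \<epsilon>
       \<Longrightarrow> f (y - y') < \<eta>"
    by (rule completion_approx_inverses_close[OF assms \<open>\<eta> > 0\<close>]) blast
  define T where "T = (\<lambda>(a, y). i y) ` {(a, y). i a \<in> W \<and> f (a * y - 1) < \<epsilon>}"
  from eventually_approx_inverse_filter[OF W]
  have "eventually (\<lambda>x. x \<in> T) (filtermap (\<lambda>(a, y). i y) (approx_inverse_filter b))"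
    unfolding eventually_filtermap by (rule eventually_mono) (auto simp: T_def)
  moreover have "x - x' \<in> U" if "x \<in> T" and "x' \<in> T" for x x'
  proof -
    obtain a y a' y' where "x = i y" "x' = i y'" and a: "i a \<in> W" "f (a * y - 1) < \<epsilon>"
      and a': "i a' \<in> W" "f (a' * y' - 1) < \<epsilon>"
      using \<open>x \<in> T\<close> \<open>x' \<in> T\<close> unfolding T_def by auto
    from close[OF a(1) a'(1) a(2) a'(2)]
    have "i (y - y') \<in> U" using \<eta> by simp
    thus ?thesis using \<open>x = i y\<close> \<open>x' = i y'\<close> ring_hom_fun_diff[OF hom] by simp
  qed
  ultimately show "\<exists>S. eventually (\<lambda>x. x \<in> S) (filtermap (\<lambda>(a, y). i y) (approx_inverse_filter b))
      \<and> (\<forall>x\<in>S. \<forall>x'\<in>S. x - x' \<in> U)"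
    by blast
qed

lemma completion_right_inverse:
  fixes b :: 'b
  assumes "b \<noteq> 0" and approx: "\<And>x e. x \<noteq> 0 \<Longrightarrow> e > 0 \<Longrightarrow> \<exists>y. f (x * y - 1) < e"
  shows "\<exists>c. b * c = 1"
proof -
  let ?H = "approx_inverse_filter b"
  have "?H \<noteq> bot" using approx_inverse_filter_ne_bot[OF assms] .
  hence "filtermap (\<lambda>(a, y). i y) ?H \<noteq> bot" by (simp add: filtermap_bot_iff)
  with add_cauchy_approx_inverse_filter[OF assms(1)] completion
  obtain c where "filtermap (\<lambda>(a, y). i y) ?H \<le> nhds c"
    unfolding is_completion_def add_complete_def by blast
  hence "((\<lambda>(a, y). i y) \<longlongrightarrow> c) ?H" by (simp add: filterlim_def)
  with tendsto_approx_inverse_filter_fst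
  have "((\<lambda>p. (i (fst p), i (snd p))) \<longlongrightarrow> (b, c)) ?H"
    unfolding case_prod_unfold by (rule tendsto_Pair)
  moreover have "continuous_on UNIV (\<lambda>q::'b \<times> 'b. fst q * snd q)"
    using completion by (simp add: is_completion_def topological_ring_def)
  ultimately have "((\<lambda>(a, y). i a * i y) \<longlongrightarrow> b * c) ?H"
    using continuous_on_tendsto_compose[of UNIV "\<lambda>q. fst q * snd q"]
    unfolding case_prod_unfold by fastforce
  moreover have "((\<lambda>(a, y). i a * i y) \<longlongrightarrow> 1) ?H"
    using tendsto_approx_inverse_filter_mult completion
    by (simp add: is_completion_def ring_hom_fun_def case_prod_unfold)
  ultimately have "b * c = 1" using tendsto_unique[OF \<open>?H \<noteq> bot\<close>] by blast
  thus ?thesis ..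
qed

end

lemma completion_field_if_topologically_simple:
  fixes i :: "'a::{comm_ring_1,topological_space} \<Rightarrow> 'b::{comm_ring_1,t2_space}"
    and f :: "'a \<Rightarrow> real"
  assumes ring: "topological_ring TYPE('a)" and completion: "is_completion i"
    and abs_topology: "topology_defined_by_abs f" and simple: "topologically_simple TYPE('a)"
  shows "is_field_ring TYPE('b)"
proof -
  have "\<exists>y. f (x * y - 1) < e" if "x \<noteq> 0" "e > 0" for x e
  proof -
    have "topological_unit x"
      using that(1) closure_zero_abs[OF abs_topology]
      by (intro topologically_simpleD[OF ring simple]) simp
    thus ?thesis
      using that(2) unfolding topological_unit_def mem_closure_abs_iff[OF abs_topology] by auto
  qed
  thus ?thesis
    unfolding is_field_ring_def
    using completion_zero_neq_one[OF completion abs_topology]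
      completion_right_inverse[OF completion abs_topology] by blast
qed

theorem lemma4p8:
  fixes i :: "'a::{comm_ring_1,topological_space} \<Rightarrow> 'b::{comm_ring_1,t2_space}"
  assumes "topological_ring TYPE('a)"
    and "is_completion i"
  shows "(is_field_ring TYPE('b) \<longrightarrow> topologically_simple TYPE('a)) \<and>
         ((huber_ring TYPE('a) \<and> (\<exists>f::'a \<Rightarrow> real. topology_defined_by_abs f) \<and> topologically_simple TYPE('a))
            \<longrightarrow> is_field_ring TYPE('b))"
  using topologically_simple_if_completion_field[OF assms(2)]
    completion_field_if_topologically_simple[OF assms] by blast

end
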